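(* Let $Z>0$, $R>0$, and $k>0$ with $k\neq m\pi/Z$ for every integer $m\ge1$. For $m\ge1$ set $k_m=\sqrt{k^2-m^2\pi^2/Z^2}$ if $k>m\pi/Z$ and $k_m=\mathrm{i}\sqrt{m^2\pi^2/Z^2-k^2}$ otherwise, and let $h(t)=tH_1^{(1)\prime}(t)/H_1^{(1)}(t)$ with $H_1^{(1)}$ the Hankel function of the first kind of order one. Let $\Gamma_R=\{(R,z):0<z<Z\}$, let $H^{1/2}_0(\Gamma_R)$ be the space of $v=\sum_{m\ge1}v_m\sin(m\pi z/Z)$ with norm $\|v\|_{H^{1/2}(\Gamma_R)}^2=\sum_{m\ge1}m|v_m|^2<\infty$, and let $H^{-1/2}(\Gamma_R)$ be its dual (pairing $\langle\xi,v\rangle_{\Gamma_R}=\int_0^Z\xi\bar v\,\mathrm{d}z$), normed equivalently by $\|\xi\|_{H^{-1/2}(\Gamma_R)}^2=\sum_{m\ge1}m^{-1}|\xi_m|^2$ for $\xi=\sum\xi_m\sin(m\pi z/Z)$. Define $T:H^{1/2}_0(\Gamma_R)\to H^{-1/2}(\Gamma_R)$ by $T\eta=\sum_{m\ge1}h(k_mR)\eta_m\sin(m\pi z/Z)$. Then there exists a constant $C>0$ depending only on $k$, $R$ and $Z$ such that $\|Tv\|_{H^{-1/2}(\Gamma_R)}\le C\|v\|_{H^{1/2}(\Gamma_R)}$ for all $v\in H^{1/2}_0(\Gamma_R)$. *)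

theory Defs
  imports "HOL-Analysis.Analysis"
begin

definition besselJ1 :: "complex \<Rightarrow> complex" where
  "besselJ1 z = (\<Sum>j. (-1) ^ j * (z / 2) ^ (2 * j + 1) / (of_nat (fact j) * of_nat (fact (j + 1))))"

text \<open>Bessel function of the second kind of order one (DLMF 10.8.1 with n = 1),
  using the principal branch of the logarithm.\<close>
definition besselY1 :: "complex \<Rightarrow> complex" where
  "besselY1 z =
     - 2 / (of_real pi * z)
     + (2 / of_real pi) * Ln (z / 2) * besselJ1 z
     - ((z / 2) / of_real pi) *
         (\<Sum>j. (Digamma (of_nat (j + 1)) + Digamma (of_nat (j + 2))) *
                (- (z ^ 2) / 4) ^ j / (of_nat (fact j) * of_nat (fact (j + 1))))"

definition hankel1 :: "complex \<Rightarrow> complex" where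
  "hankel1 z = besselJ1 z + \<i> * besselY1 z"

definition hfun :: "complex \<Rightarrow> complex" where
  "hfun t = t * deriv hankel1 t / hankel1 t"

definition kmode :: "real \<Rightarrow> real \<Rightarrow> nat \<Rightarrow> complex" where
  "kmode k Z m =
     (if k > real m * pi / Z then complex_of_real (sqrt (k\<^sup>2 - (real m * pi / Z)\<^sup>2))
      else \<i> * complex_of_real (sqrt ((real m * pi / Z)\<^sup>2 - k\<^sup>2)))"

text \<open>Elements of H^{1/2}_0(Gamma_R) and H^{-1/2}(Gamma_R) are represented by their
  sine coefficient sequences (index m \<ge> 1; the entry at index 0 is ignored
  since its weight vanishes).\<close>
definition in_Hhalf :: "(nat \<Rightarrow> complex) \<Rightarrow> bool" where
  "in_Hhalf v \<longleftrightarrow> summable (\<lambda>m. real m * (cmod (v m))\<^sup>2)"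

definition norm_Hhalf :: "(nat \<Rightarrow> complex) \<Rightarrow> real" where
  "norm_Hhalf v = sqrt (\<Sum>m. real m * (cmod (v m))\<^sup>2)"

definition in_Hmhalf :: "(nat \<Rightarrow> complex) \<Rightarrow> bool" where
  "in_Hmhalf \<xi> \<longleftrightarrow> summable (\<lambda>m. (cmod (\<xi> m))\<^sup>2 / real m)"

definition norm_Hmhalf :: "(nat \<Rightarrow> complex) \<Rightarrow> real" where
  "norm_Hmhalf \<xi> = sqrt (\<Sum>m. (cmod (\<xi> m))\<^sup>2 / real m)"

definition DtN :: "real \<Rightarrow> real \<Rightarrow> real \<Rightarrow> (nat \<Rightarrow> complex) \<Rightarrow> (nat \<Rightarrow> complex)" where
  "DtN k R Z \<eta> = (\<lambda>m. if m = 0 then 0 else hfun (kmode k Z m * of_real R) * \<eta> m)"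

end

theory Submission
  imports Defs
begin

(* Only finitely many modes propagate; for the others k_m R = i s with s <= m pi R / Z, so the
   theorem reduces to |h(i s)| <= C s for large s, i.e. |H'(i s)| <= C |H(i s)| for H = H_1^(1).
   Expanding J_1 and Y_1 as power series in -z^2/4 shows that H solves Bessel's equation in the
   form (z H')' = (1/z - z) H off the branch cut, so the real and imaginary parts of H(i s) solve
   the modified Bessel equation (s u')' = (s + 1/s) u.  For such a real u the energy u (s u') is
   nondecreasing.  If it becomes positive, u^2 grows and the decreasing quantity
   (s u')^2 - (s^2 + 1) u^2 bounds u'/u.  Otherwise r = -u'/u is a nonnegative solution of the
   Riccati equation r' = r^2 - r/s - 1 - 1/s^2, which would blow up in finite time once r >= 3;
   hence |u'| <= 3 |u|. *)

definition bessel_coeff :: "nat \<Rightarrow> complex" where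
  "bessel_coeff j = 1 / (of_nat (fact j) * of_nat (fact (j + 1)))"

definition digamma_pair :: "nat \<Rightarrow> complex" where
  "digamma_pair j = Digamma (of_nat (j + 1)) + Digamma (of_nat (j + 2))"

definition besselJ1_fps :: "complex fps" where
  "besselJ1_fps = Abs_fps bessel_coeff"

definition besselY1_fps :: "complex fps" where
  "besselY1_fps = Abs_fps (\<lambda>j. digamma_pair j * bessel_coeff j)"

lemma harm_le_self: "harm n \<le> real n"
proof -
  have "harm n = (\<Sum>k=1..n. inverse (real k))" unfolding harm_def by simp
  also have "\<dots> \<le> (\<Sum>k=1..n. 1)" by (intro sum_mono) (auto simp: inverse_le_1_iff)
  finally show ?thesis by simp
qed

lemma digamma_pair_eq_harm: "digamma_pair j = harm j + harm (Suc j) - 2 * euler_mascheroni"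
  using Digamma_of_nat[of j, where 'a=complex] Digamma_of_nat[of "Suc j", where 'a=complex]
  unfolding digamma_pair_def by (simp add: add.commute)

lemma norm_digamma_pair_le: "norm (digamma_pair j) \<le> 3 * (real j + 1)"
proof -
  have "digamma_pair j = of_real (harm j + harm (Suc j) - 2 * euler_mascheroni)"
    unfolding digamma_pair_eq_harm by (simp add: of_real_harm)
  moreover have "\<bar>harm j + harm (Suc j) - 2 * euler_mascheroni\<bar> \<le> 3 * (real j + 1)"
    using harm_le_self[of j] harm_le_self[of "Suc j"] harm_nonneg[of j, where 'a=real]
      harm_nonneg[of "Suc j", where 'a=real] euler_mascheroni_pos euler_mascheroni_less_13_over_22
    by (simp add: abs_le_iff)
  ultimately show ?thesis by (simp only: norm_of_real)
qed

lemma bessel_coeff_eq_of_real: "bessel_coeff j = of_real (1 / (fact j * fact (j + 1)))"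
  unfolding bessel_coeff_def by (simp del: fact_Suc)

lemma norm_bessel_coeff: "norm (bessel_coeff j) = 1 / (fact j * fact (j + 1))"
  unfolding bessel_coeff_eq_of_real norm_of_real by (simp del: fact_Suc)

lemma norm_bessel_coeff_le: "norm (bessel_coeff j) \<le> 1 / fact j"
  unfolding norm_bessel_coeff
  by (intro divide_left_mono) (auto simp: fact_ge_1 simp del: fact_Suc)

lemma norm_digamma_pair_bessel_coeff_le: "norm (digamma_pair j * bessel_coeff j) \<le> 3 / fact j"
proof -
  have "norm (digamma_pair j * bessel_coeff j) \<le> 3 * (real j + 1) / (fact j * fact (j + 1))"
    unfolding norm_mult norm_bessel_coeff using norm_digamma_pair_le[of j] by (simp add: divide_right_mono)
  also have "\<dots> = 3 / (fact j * fact j)" by (simp add: divide_simps)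
  also have "\<dots> \<le> 3 / fact j" by (intro divide_left_mono) (auto simp: fact_ge_1)
  finally show ?thesis .
qed

lemma fps_conv_radius_eq_infinity_if_fact_bound:
  fixes F :: "complex fps"
  assumes "\<And>j. norm (fps_nth F j) \<le> K / fact j"
  shows "fps_conv_radius F = \<infinity>"
  unfolding fps_conv_radius_def
proof (rule conv_radius_inftyI'', rule summable_comparison_test)
  fix z :: complex
  show "\<exists>N. \<forall>n\<ge>N. norm (fps_nth F n * z ^ n) \<le> K * (inverse (fact n) * norm z ^ n)"
    using mult_right_mono[OF assms norm_ge_zero, of _ "z ^ _"]
    by (intro exI[of _ 0] allI impI) (simp add: norm_mult norm_power divide_inverse mult.assoc)
  show "summable (\<lambda>n. K * (inverse (fact n) * norm z ^ n))"
    by (intro summable_mult summable_exp)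
qed

lemma fps_conv_radius_besselJ1_fps [simp]: "fps_conv_radius besselJ1_fps = \<infinity>"
  by (rule fps_conv_radius_eq_infinity_if_fact_bound[where K=1])
    (simp add: besselJ1_fps_def norm_bessel_coeff_le)

lemma fps_conv_radius_besselY1_fps [simp]: "fps_conv_radius besselY1_fps = \<infinity>"
  by (rule fps_conv_radius_eq_infinity_if_fact_bound[where K=3])
    (simp add: besselY1_fps_def norm_digamma_pair_bessel_coeff_le)

(* Bessel's equation for z/2 * F(-z^2/4), transported to F (see bessel_series_equation). *)
definition bessel_fps_op :: "complex fps \<Rightarrow> complex fps" where
  "bessel_fps_op F = fps_X * fps_deriv (fps_deriv F) + 2 * fps_deriv F - F"

lemma bessel_coeff_Suc: "bessel_coeff n = of_nat ((n + 1) * (n + 2)) * bessel_coeff (n + 1)"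
proof -
  have fact_eq: "fact (n + 1) * fact (n + 1 + 1) = ((n + 1) * (n + 2)) * (fact n * fact (n + 1) :: nat)"
    by (simp only: fact_Suc Suc_eq_plus1[symmetric]) (simp add: algebra_simps)
  have "bessel_coeff (n + 1) = 1 / (of_nat ((n + 1) * (n + 2)) * of_nat (fact n * fact (n + 1)))"
    unfolding bessel_coeff_def of_nat_mult[symmetric] fact_eq by simp
  moreover have "bessel_coeff n = 1 / of_nat (fact n * fact (n + 1))"
    unfolding bessel_coeff_def by simp
  moreover have "(of_nat ((n + 1) * (n + 2)) :: complex) \<noteq> 0"
    unfolding of_nat_eq_0_iff by simp
  ultimately show ?thesis by (simp del: of_nat_mult fact_Suc)
qed

lemma digamma_pair_Suc:
  "digamma_pair (Suc n) = digamma_pair n + 1 / of_nat (Suc n) + 1 / of_nat (Suc (Suc n))"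
  unfolding digamma_pair_eq_harm by (simp add: harm_Suc field_simps)

lemma bessel_fps_op_besselJ1_fps: "bessel_fps_op besselJ1_fps = 0"
proof (rule fps_ext)
  fix n
  have "fps_nth (2 * fps_deriv besselJ1_fps) n = 2 * (of_nat (n + 1) * bessel_coeff (n + 1))"
    unfolding besselJ1_fps_def by (simp add: numeral_fps_const)
  moreover have "fps_nth (fps_X * fps_deriv (fps_deriv besselJ1_fps)) n
      = of_nat n * of_nat (n + 1) * bessel_coeff (n + 1)"
    unfolding besselJ1_fps_def by (cases n) auto
  ultimately show "fps_nth (bessel_fps_op besselJ1_fps) n = fps_nth 0 n"
    unfolding bessel_fps_op_def
    by (simp add: besselJ1_fps_def bessel_coeff_Suc[of n] algebra_simps)
qed

lemma fps_X_mult_bessel_fps_op_besselY1_fps: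
  "fps_X * bessel_fps_op besselY1_fps = besselJ1_fps + 2 * fps_X * fps_deriv besselJ1_fps - 1"
proof (rule fps_ext)
  fix n
  show "fps_nth (fps_X * bessel_fps_op besselY1_fps) n
      = fps_nth (besselJ1_fps + 2 * fps_X * fps_deriv besselJ1_fps - 1) n"
  proof (cases n)
    case 0
    then show ?thesis
      by (simp add: bessel_fps_op_def besselJ1_fps_def bessel_coeff_def numeral_fps_const)
  next
    case (Suc m)
    have step: "x * a * (d' * c) + 2 * (a * (d' * c)) - d * (a * b * c) = (b + a) * c"
      if "b = x + 2" "d' = d + 1 / a + 1 / b" "a \<noteq> 0" "b \<noteq> 0" for x a b d d' c :: complex
    proof -
      have "x * a * (d' * c) + 2 * (a * (d' * c)) - d * (a * b * c) = a * b * (d' - d) * c"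
        using that(1) by (simp add: algebra_simps)
      also have "\<dots> = (b + a) * c"
        using that(2-4) by (simp add: field_simps)
      finally show ?thesis .
    qed
    have nonzero: "(of_nat (m + 1) :: complex) \<noteq> 0" "(of_nat (m + 2) :: complex) \<noteq> 0"
      unfolding of_nat_eq_0_iff by simp_all
    have "fps_nth (fps_X * bessel_fps_op besselY1_fps) n
        = of_nat m * of_nat (m + 1) * (digamma_pair (m + 1) * bessel_coeff (m + 1))
          + 2 * (of_nat (m + 1) * (digamma_pair (m + 1) * bessel_coeff (m + 1)))
          - digamma_pair m * bessel_coeff m"
      using Suc unfolding bessel_fps_op_def besselY1_fps_def
      by (cases m) (simp_all add: numeral_fps_const)
    also have "\<dots> = (of_nat (m + 2) + of_nat (m + 1)) * bessel_coeff (m + 1)"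
      unfolding bessel_coeff_Suc[of m] of_nat_mult
      by (rule step[OF _ _ nonzero]) (simp_all add: digamma_pair_Suc)
    also have "\<dots> = fps_nth (besselJ1_fps + 2 * fps_X * fps_deriv besselJ1_fps - 1) n"
      using Suc unfolding besselJ1_fps_def by (simp add: numeral_fps_const mult.assoc algebra_simps)
    finally show ?thesis .
  qed
qed

definition bessel_arg :: "complex \<Rightarrow> complex" where
  "bessel_arg z = - (z ^ 2) / 4"

definition bessel_series :: "complex fps \<Rightarrow> complex \<Rightarrow> complex" where
  "bessel_series F z = z / 2 * eval_fps F (bessel_arg z)"

definition bessel_series_deriv :: "complex fps \<Rightarrow> complex \<Rightarrow> complex" where
  "bessel_series_deriv F z =
     eval_fps F (bessel_arg z) / 2 + bessel_arg z * eval_fps (fps_deriv F) (bessel_arg z)"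

lemma fps_conv_radius_fps_deriv_eq_infinity:
  "fps_conv_radius (F :: complex fps) = \<infinity> \<Longrightarrow> fps_conv_radius (fps_deriv F) = \<infinity>"
  using fps_conv_radius_deriv[of F] by simp

lemma fps_conv_radius_mult_eq_infinity:
  "fps_conv_radius F = \<infinity> \<Longrightarrow> fps_conv_radius G = \<infinity> \<Longrightarrow> fps_conv_radius (F * G :: complex fps) = \<infinity>"
  using fps_conv_radius_mult[of F G] by simp

lemma fps_conv_radius_add_eq_infinity:
  "fps_conv_radius F = \<infinity> \<Longrightarrow> fps_conv_radius G = \<infinity> \<Longrightarrow> fps_conv_radius (F + G :: complex fps) = \<infinity>"
  using fps_conv_radius_add[of F G] by simp

lemma fps_conv_radius_diff_eq_infinity:
  "fps_conv_radius F = \<infinity> \<Longrightarrow> fps_conv_radius G = \<infinity> \<Longrightarrow> fps_conv_radius (F - G :: complex fps) = \<infinity>"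
  using fps_conv_radius_diff[of F G] by simp

lemma eval_fps_bessel_fps_op:
  assumes "fps_conv_radius F = \<infinity>"
  shows "eval_fps (bessel_fps_op F) x
    = x * eval_fps (fps_deriv (fps_deriv F)) x + 2 * eval_fps (fps_deriv F) x - eval_fps F x"
proof -
  have F': "fps_conv_radius (fps_deriv F) = \<infinity>"
    and F'': "fps_conv_radius (fps_deriv (fps_deriv F)) = \<infinity>"
    using assms by (simp_all add: fps_conv_radius_fps_deriv_eq_infinity)
  then show ?thesis
    unfolding bessel_fps_op_def using assms
    by (simp add: eval_fps_diff eval_fps_add eval_fps_mult fps_conv_radius_mult_eq_infinity
        fps_conv_radius_add_eq_infinity)
qed

lemma has_field_derivative_eval_fps_bessel_arg:
  assumes "fps_conv_radius F = \<infinity>"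
  shows "((\<lambda>z. eval_fps F (bessel_arg z)) has_field_derivative
           eval_fps (fps_deriv F) (bessel_arg z) * (- z / 2)) (at z)"
proof (rule DERIV_chain2[of "eval_fps F"])
  show "(eval_fps F has_field_derivative eval_fps (fps_deriv F) (bessel_arg z)) (at (bessel_arg z))"
    using assms by (intro has_field_derivative_eval_fps) simp
  show "(bessel_arg has_field_derivative - z / 2) (at z)"
    unfolding bessel_arg_def[abs_def] by (auto intro!: derivative_eq_intros)
qed

lemma has_field_derivative_bessel_series:
  assumes "fps_conv_radius F = \<infinity>"
  shows "(bessel_series F has_field_derivative bessel_series_deriv F z) (at z)"
proof -
  have "(bessel_series F has_field_derivative
      1 / 2 * eval_fps F (bessel_arg z)
      + eval_fps (fps_deriv F) (bessel_arg z) * (- z / 2) * (z / 2)) (at z)"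
    unfolding bessel_series_def[abs_def]
    using DERIV_mult[OF DERIV_cdivide[OF DERIV_ident, of 2]
        has_field_derivative_eval_fps_bessel_arg[OF assms]]
    by simp
  then show ?thesis
    unfolding bessel_series_deriv_def by (simp add: bessel_arg_def field_simps power2_eq_square)
qed

lemma bessel_series_equation:
  assumes F: "fps_conv_radius F = \<infinity>" and z: "z \<noteq> 0"
  shows "((\<lambda>z. z * bessel_series_deriv F z) has_field_derivative
           (1 / z - z) * bessel_series F z
           + 2 * bessel_arg z * eval_fps (bessel_fps_op F) (bessel_arg z)) (at z)"
proof -
  have F': "fps_conv_radius (fps_deriv F) = \<infinity>"
    using F by (rule fps_conv_radius_fps_deriv_eq_infinity)
  define E0 E1 E2 where "E0 = eval_fps F (bessel_arg z)"
    and "E1 = eval_fps (fps_deriv F) (bessel_arg z)"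
    and "E2 = eval_fps (fps_deriv (fps_deriv F)) (bessel_arg z)"
  have "((\<lambda>z. z * bessel_series_deriv F z) has_field_derivative
      z * (E1 * (- z / 2) / 2 + (bessel_arg z * (E2 * (- z / 2)) + (- z / 2) * E1))
      + 1 * bessel_series_deriv F z) (at z)"
    unfolding bessel_series_deriv_def E0_def E1_def E2_def
    by (intro DERIV_mult' DERIV_ident DERIV_add DERIV_cdivide
        has_field_derivative_eval_fps_bessel_arg F F')
      (unfold bessel_arg_def, auto intro!: derivative_eq_intros)
  moreover have "z * (E1 * (- z / 2) / 2 + (bessel_arg z * (E2 * (- z / 2)) + (- z / 2) * E1))
      + 1 * bessel_series_deriv F z
      = (1 / z - z) * bessel_series F z + 2 * bessel_arg z * (bessel_arg z * E2 + 2 * E1 - E0)"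
    using z unfolding bessel_series_deriv_def bessel_series_def E0_def[symmetric] E1_def[symmetric]
    by (simp add: bessel_arg_def field_simps power2_eq_square)
  ultimately show ?thesis
    unfolding eval_fps_bessel_fps_op[OF F] E0_def E1_def E2_def by simp
qed

lemma besselJ1_eq_bessel_series: "besselJ1 = bessel_series besselJ1_fps"
proof
  fix z
  have "summable (\<lambda>n. fps_nth besselJ1_fps n * bessel_arg z ^ n)"
    by (rule summable_fps) simp
  then have summable: "summable (\<lambda>n. bessel_coeff n * bessel_arg z ^ n)"
    by (simp add: besselJ1_fps_def)
  have "bessel_series besselJ1_fps z = (\<Sum>n. z / 2 * (bessel_coeff n * bessel_arg z ^ n))"
    unfolding bessel_series_def eval_fps_def besselJ1_fps_def
    using suminf_mult[OF summable, of "z / 2"] by simp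
  also have "\<dots> = besselJ1 z"
    unfolding besselJ1_def
  proof (intro arg_cong[where f=suminf] ext)
    fix n
    have "bessel_arg z = (-1) * (z / 2) ^ 2"
      by (simp add: bessel_arg_def power_divide)
    then have "bessel_arg z ^ n = (-1) ^ n * ((z / 2) ^ 2) ^ n"
      by (simp only: power_mult_distrib)
    moreover have "(z / 2) ^ (2 * n + 1) = z / 2 * ((z / 2) ^ 2) ^ n"
      by (simp add: power_mult)
    ultimately show "z / 2 * (bessel_coeff n * bessel_arg z ^ n)
        = (-1) ^ n * (z / 2) ^ (2 * n + 1) / (of_nat (fact n) * of_nat (fact (n + 1)))"
      unfolding bessel_coeff_def by (simp only:) (simp add: field_simps del: fact_Suc)
  qed
  finally show "besselJ1 z = bessel_series besselJ1_fps z" ..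
qed

lemma besselY1_eq_bessel_series:
  "besselY1 z = - 2 / (of_real pi * z) + 2 / of_real pi * Ln (z / 2) * besselJ1 z
     - 1 / of_real pi * bessel_series besselY1_fps z"
proof -
  have "(\<Sum>j. digamma_pair j * (- (z ^ 2) / 4) ^ j / (of_nat (fact j) * of_nat (fact (j + 1))))
      = eval_fps besselY1_fps (bessel_arg z)"
    unfolding eval_fps_def besselY1_fps_def bessel_arg_def bessel_coeff_def by simp
  then show ?thesis
    unfolding besselY1_def digamma_pair_def[symmetric] bessel_series_def by simp
qed

definition besselJ1_deriv :: "complex \<Rightarrow> complex" where
  "besselJ1_deriv = bessel_series_deriv besselJ1_fps"

definition besselY1_deriv :: "complex \<Rightarrow> complex" where
  "besselY1_deriv z = 2 / (of_real pi * z ^ 2)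
     + 2 / of_real pi * (besselJ1 z / z + Ln (z / 2) * besselJ1_deriv z)
     - 1 / of_real pi * bessel_series_deriv besselY1_fps z"

definition hankel1_deriv :: "complex \<Rightarrow> complex" where
  "hankel1_deriv z = besselJ1_deriv z + \<i> * besselY1_deriv z"

lemma has_field_derivative_besselJ1: "(besselJ1 has_field_derivative besselJ1_deriv z) (at z)"
  unfolding besselJ1_eq_bessel_series besselJ1_deriv_def
  by (rule has_field_derivative_bessel_series) simp

lemma besselJ1_equation:
  assumes "z \<noteq> 0"
  shows "((\<lambda>z. z * besselJ1_deriv z) has_field_derivative (1 / z - z) * besselJ1 z) (at z)"
  using bessel_series_equation[OF fps_conv_radius_besselJ1_fps assms]
  unfolding besselJ1_eq_bessel_series besselJ1_deriv_def
  by (simp add: bessel_fps_op_besselJ1_fps)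

lemma bessel_arg_mult_bessel_fps_op_besselY1_fps:
  "bessel_arg z * eval_fps (bessel_fps_op besselY1_fps) (bessel_arg z) = 2 * besselJ1_deriv z - 1"
proof -
  define w where "w = bessel_arg z"
  have radius: "fps_conv_radius (bessel_fps_op besselY1_fps) = \<infinity>"
    "fps_conv_radius (2 * fps_X :: complex fps) = \<infinity>"
    "fps_conv_radius (fps_deriv besselJ1_fps) = \<infinity>"
    "fps_conv_radius (2 * fps_X * fps_deriv besselJ1_fps) = \<infinity>"
    by (simp_all add: bessel_fps_op_def fps_conv_radius_fps_deriv_eq_infinity
        fps_conv_radius_mult_eq_infinity fps_conv_radius_add_eq_infinity fps_conv_radius_diff_eq_infinity)
  have "w * eval_fps (bessel_fps_op besselY1_fps) w = eval_fps (fps_X * bessel_fps_op besselY1_fps) w"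
    using radius by (simp add: eval_fps_mult)
  also have "\<dots> = eval_fps (besselJ1_fps + 2 * fps_X * fps_deriv besselJ1_fps - 1) w"
    unfolding fps_X_mult_bessel_fps_op_besselY1_fps ..
  also have "\<dots> = eval_fps besselJ1_fps w + 2 * w * eval_fps (fps_deriv besselJ1_fps) w - 1"
    using radius by (simp add: eval_fps_mult eval_fps_add eval_fps_diff fps_conv_radius_add_eq_infinity)
  also have "\<dots> = 2 * besselJ1_deriv z - 1"
    unfolding besselJ1_deriv_def bessel_series_deriv_def w_def by (simp add: algebra_simps)
  finally show ?thesis unfolding w_def .
qed

lemma has_field_derivative_Ln_half:
  assumes "z / 2 \<notin> \<real>\<^sub>\<le>\<^sub>0"
  shows "((\<lambda>z. Ln (z / 2)) has_field_derivative 1 / z) (at z)"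
proof -
  have "((\<lambda>z. Ln (z / 2)) has_field_derivative inverse (z / 2) * (1 / 2)) (at z)"
    using has_field_derivative_Ln[OF assms]
    by (intro DERIV_chain2[where f=Ln and g="\<lambda>z. z / 2"]) (auto intro!: derivative_eq_intros)
  then show ?thesis by (simp add: field_simps)
qed

lemma has_field_derivative_const_divide_mult:
  "z \<noteq> 0 \<Longrightarrow> ((\<lambda>z. c / (a * z)) has_field_derivative - c / (a * z ^ 2)) (at z)"
  by (cases "a = 0") (auto intro!: derivative_eq_intros simp: field_simps power2_eq_square)

lemma has_field_derivative_besselY1:
  assumes z: "z / 2 \<notin> \<real>\<^sub>\<le>\<^sub>0"
  shows "(besselY1 has_field_derivative besselY1_deriv z) (at z)"
proof -
  have "z \<noteq> 0" using z by auto
  have "(besselY1 has_field_derivative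
      - (- 2) / (of_real pi * z ^ 2)
      + (2 / of_real pi * Ln (z / 2) * besselJ1_deriv z + 2 / of_real pi * (1 / z) * besselJ1 z)
      - 1 / of_real pi * bessel_series_deriv besselY1_fps z) (at z)"
    unfolding besselY1_eq_bessel_series[abs_def]
    by (intro DERIV_diff DERIV_add DERIV_mult' DERIV_cmult has_field_derivative_const_divide_mult
        \<open>z \<noteq> 0\<close> has_field_derivative_Ln_half[OF z] has_field_derivative_besselJ1
        has_field_derivative_bessel_series fps_conv_radius_besselY1_fps)
  then show ?thesis
    unfolding besselY1_deriv_def by (simp add: algebra_simps)
qed

lemma besselY1_equation:
  assumes z: "z / 2 \<notin> \<real>\<^sub>\<le>\<^sub>0"
  shows "((\<lambda>z. z * besselY1_deriv z) has_field_derivative (1 / z - z) * besselY1 z) (at z)"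
proof -
  have "z \<noteq> 0" using z by auto
  \<comment> \<open>\<open>G\<close> is \<open>z * besselY1_deriv z\<close> with the factor \<open>z\<close> cancelled, so that it can be
     differentiated termwise.\<close>
  define G where "G z = 2 / (of_real pi * z)
      + 2 / of_real pi * (besselJ1 z + Ln (z / 2) * (z * besselJ1_deriv z))
      - 1 / of_real pi * (z * bessel_series_deriv besselY1_fps z)" for z
  define G' where "G' = - 2 / (of_real pi * z ^ 2)
      + 2 / of_real pi * (besselJ1_deriv z
          + (Ln (z / 2) * ((1 / z - z) * besselJ1 z) + 1 / z * (z * besselJ1_deriv z)))
      - 1 / of_real pi * ((1 / z - z) * bessel_series besselY1_fps z
          + 2 * bessel_arg z * eval_fps (bessel_fps_op besselY1_fps) (bessel_arg z))"
  have "(G has_field_derivative G') (at z)"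
    unfolding G_def[abs_def] G'_def
    by (intro DERIV_diff DERIV_add DERIV_mult' DERIV_cmult has_field_derivative_const_divide_mult
        \<open>z \<noteq> 0\<close> has_field_derivative_Ln_half[OF z] has_field_derivative_besselJ1
        besselJ1_equation bessel_series_equation fps_conv_radius_besselY1_fps)
  moreover have "G' = (1 / z - z) * besselY1 z"
    using \<open>z \<noteq> 0\<close>
    unfolding G'_def besselY1_eq_bessel_series mult.assoc[of 2 "bessel_arg z"]
      bessel_arg_mult_bessel_fps_op_besselY1_fps
    by (simp add: field_simps power2_eq_square)
  ultimately have "(G has_field_derivative (1 / z - z) * besselY1 z) (at z)" by simp
  then show ?thesis
  proof (rule has_field_derivative_transform_within_open)
    show "open (- {0 :: complex})" "z \<in> - {0}" using \<open>z \<noteq> 0\<close> by auto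
    show "G w = w * besselY1_deriv w" if "w \<in> - {0}" for w
      using that unfolding G_def besselY1_deriv_def by (simp add: field_simps power2_eq_square)
  qed
qed

lemma has_field_derivative_hankel1:
  "z / 2 \<notin> \<real>\<^sub>\<le>\<^sub>0 \<Longrightarrow> (hankel1 has_field_derivative hankel1_deriv z) (at z)"
  unfolding hankel1_def[abs_def] hankel1_deriv_def
  by (intro DERIV_add DERIV_cmult has_field_derivative_besselJ1 has_field_derivative_besselY1)

lemma hankel1_equation:
  assumes z: "z / 2 \<notin> \<real>\<^sub>\<le>\<^sub>0"
  shows "((\<lambda>z. z * hankel1_deriv z) has_field_derivative (1 / z - z) * hankel1 z) (at z)"
proof -
  have "z \<noteq> 0" using z by auto
  have "((\<lambda>z. z * besselJ1_deriv z + \<i> * (z * besselY1_deriv z)) has_field_derivative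
      (1 / z - z) * besselJ1 z + \<i> * ((1 / z - z) * besselY1 z)) (at z)"
    by (intro DERIV_add DERIV_cmult besselJ1_equation besselY1_equation z \<open>z \<noteq> 0\<close>)
  then show ?thesis
    unfolding hankel1_deriv_def hankel1_def by (simp add: algebra_simps)
qed

lemma nonneg_if_deriv_pos_where_nonneg:
  fixes \<phi> \<phi>' :: "real \<Rightarrow> real"
  assumes deriv: "\<And>s. s \<ge> a \<Longrightarrow> (\<phi> has_real_derivative \<phi>' s) (at s)"
    and pos: "\<And>s. s \<ge> a \<Longrightarrow> \<phi> s \<ge> 0 \<Longrightarrow> \<phi>' s > 0"
    and start: "\<phi> a \<ge> 0" and "t \<ge> a"
  shows "\<phi> t \<ge> 0"
proof (rule ccontr)
  assume neg: "\<not> \<phi> t \<ge> 0"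
  define S where "S = {a..t} \<inter> \<phi> -` {0..}"
  have "continuous_on {a..t} \<phi>"
    by (intro continuous_at_imp_continuous_on ballI DERIV_isCont[OF deriv]) auto
  then have "closed S"
    unfolding S_def by (intro continuous_closed_preimage) auto
  moreover have "S \<noteq> {}" using start \<open>t \<ge> a\<close> unfolding S_def by auto
  moreover have bdd: "bdd_above S" unfolding S_def by (auto intro: bdd_aboveI[of _ t])
  ultimately have "Sup S \<in> S" by (intro closed_contains_Sup)
  then have T: "a \<le> Sup S" "Sup S < t" "\<phi> (Sup S) \<ge> 0"
    using neg unfolding S_def by (auto simp: order.order_iff_strict)
  obtain d where "d > 0" and d: "\<And>h. h > 0 \<Longrightarrow> h < d \<Longrightarrow> \<phi> (Sup S) < \<phi> (Sup S + h)"
    using DERIV_pos_inc_right[OF deriv[OF T(1)] pos[OF T(1) T(3)]] by blast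
  define h where "h = min (d / 2) ((t - Sup S) / 2)"
  have "h \<le> d / 2" "h \<le> (t - Sup S) / 2" "h > 0"
    using \<open>d > 0\<close> T unfolding h_def by (simp_all add: min_def)
  with \<open>d > 0\<close> T have h: "h > 0" "h < d" "Sup S + h \<le> t"
    by auto
  then have "Sup S + h \<in> S"
    using d[OF h(1,2)] T unfolding S_def by auto
  then have "Sup S + h \<le> Sup S" by (rule cSup_upper[OF _ bdd])
  with h show False by simp
qed

lemma riccati_solution_stays_ge_3:
  fixes r :: "real \<Rightarrow> real"
  assumes deriv: "\<And>t. t \<ge> 1 \<Longrightarrow> (r has_real_derivative (r t)\<^sup>2 - r t / t - 1 - 1 / t\<^sup>2) (at t)"
    and "s \<ge> 1" "r s \<ge> 3" "t \<ge> s"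
  shows "r t \<ge> 3"
proof -
  have "r t - 3 \<ge> 0"
  proof (rule nonneg_if_deriv_pos_where_nonneg[where \<phi>="\<lambda>t. r t - 3"])
    fix t assume "t \<ge> s"
    then show "((\<lambda>t. r t - 3) has_real_derivative (r t)\<^sup>2 - r t / t - 1 - 1 / t\<^sup>2) (at t)"
      using \<open>s \<ge> 1\<close> by (auto intro!: derivative_eq_intros deriv)
    assume "r t - 3 \<ge> 0"
    moreover have "r t / t \<le> r t" "1 / t\<^sup>2 \<le> 1"
      using \<open>t \<ge> s\<close> \<open>s \<ge> 1\<close> \<open>r t - 3 \<ge> 0\<close> by (simp_all add: divide_le_eq one_le_power)
    moreover have "(r t)\<^sup>2 \<ge> 3 * r t"
      using \<open>r t - 3 \<ge> 0\<close> by (simp add: power2_eq_square)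
    ultimately show "(r t)\<^sup>2 - r t / t - 1 - 1 / t\<^sup>2 > 0" by linarith
  qed (use assms in auto)
  then show ?thesis by simp
qed

lemma riccati_solution_less_3:
  fixes r :: "real \<Rightarrow> real"
  assumes deriv: "\<And>t. t \<ge> 1 \<Longrightarrow> (r has_real_derivative (r t)\<^sup>2 - r t / t - 1 - 1 / t\<^sup>2) (at t)"
    and "s \<ge> 1"
  shows "r s < 3"
proof (rule ccontr)
  assume "\<not> r s < 3"
  then have stays: "r t \<ge> 3" if "t \<ge> s" for t
    using riccati_solution_stays_ge_3[OF deriv \<open>s \<ge> 1\<close> _ that] by simp
  \<comment> \<open>Once \<open>r \<ge> 3\<close> we have \<open>r' \<ge> r\<^sup>2/3\<close>, so \<open>1/r + t/3\<close> is nonincreasing: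
     \<open>r\<close> would blow up within time 3.\<close>
  define \<rho> where "\<rho> t = 1 / r t + t / 3" for t
  have "\<rho> (s + 3) \<le> \<rho> s"
  proof (rule DERIV_nonpos_imp_nonincreasing[of s "s + 3" \<rho>])
    fix t assume t: "s \<le> t" "t \<le> s + 3"
    have r3: "r t \<ge> 3" using stays t by simp
    have "(\<rho> has_real_derivative - ((r t)\<^sup>2 - r t / t - 1 - 1 / t\<^sup>2) / (r t)\<^sup>2 + 1 / 3) (at t)"
      unfolding \<rho>_def[abs_def] using r3 t \<open>s \<ge> 1\<close>
      by (auto intro!: derivative_eq_intros deriv simp: power2_eq_square)
    moreover have "(r t)\<^sup>2 - r t / t - 1 - 1 / t\<^sup>2 \<ge> (r t)\<^sup>2 / 3"
    proof -
      have "r t / t \<le> r t" "1 / t\<^sup>2 \<le> 1"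
        using t \<open>s \<ge> 1\<close> r3 by (simp_all add: divide_le_eq one_le_power)
      moreover have "r t * (2 * r t - 3) \<ge> 3 * 3" using r3 by (intro mult_mono) auto
      ultimately show ?thesis by (simp add: power2_eq_square algebra_simps)
    qed
    then have "- ((r t)\<^sup>2 - r t / t - 1 - 1 / t\<^sup>2) / (r t)\<^sup>2 + 1 / 3 \<le> 0"
      using r3 by (simp add: field_simps)
    ultimately show "\<exists>y. (\<rho> has_real_derivative y) (at t) \<and> y \<le> 0" by blast
  qed simp
  moreover have "\<rho> s \<le> 1 / 3 + s / 3" using stays[of s] unfolding \<rho>_def by (simp add: divide_le_eq)
  moreover have "\<rho> (s + 3) > (s + 3) / 3" using stays[of "s + 3"] unfolding \<rho>_def by simp
  ultimately show False by (simp add: field_simps)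
qed

(* The modified Bessel equation of order one, s^2 u'' + s u' - (s^2 + 1) u = 0, written as a
   first-order system with v = s u'. *)
locale modified_bessel1_solution =
  fixes u u' v :: "real \<Rightarrow> real"
  assumes has_real_derivative_u: "\<And>s. s > 0 \<Longrightarrow> (u has_real_derivative u' s) (at s)"
    and has_real_derivative_v: "\<And>s. s > 0 \<Longrightarrow> (v has_real_derivative (s + 1 / s) * u s) (at s)"
    and v_eq: "\<And>s. s > 0 \<Longrightarrow> v s = s * u' s"
begin

definition energy :: "real \<Rightarrow> real" where
  "energy s = u s * v s"

definition defect :: "real \<Rightarrow> real" where
  "defect s = (v s)\<^sup>2 - (s\<^sup>2 + 1) * (u s)\<^sup>2"

lemma has_real_derivative_energy:
  assumes "s > 0"
  shows "(energy has_real_derivative s * (u' s)\<^sup>2 + (s + 1 / s) * (u s)\<^sup>2) (at s)"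
proof -
  have "(energy has_real_derivative u' s * v s + (s + 1 / s) * u s * u s) (at s)"
    unfolding energy_def[abs_def]
    using DERIV_mult[OF has_real_derivative_u has_real_derivative_v, OF assms assms] .
  moreover have "u' s * v s + (s + 1 / s) * u s * u s = s * (u' s)\<^sup>2 + (s + 1 / s) * (u s)\<^sup>2"
    using v_eq[OF assms] by (simp add: power2_eq_square algebra_simps)
  ultimately show ?thesis by simp
qed

lemma energy_mono: "0 < x \<Longrightarrow> x \<le> y \<Longrightarrow> energy x \<le> energy y"
  by (rule DERIV_nonneg_imp_nondecreasing[of x y energy])
    (auto intro!: exI has_real_derivative_energy)

lemma defect_antimono: "0 < x \<Longrightarrow> x \<le> y \<Longrightarrow> defect y \<le> defect x"
proof (rule DERIV_nonpos_imp_nonincreasing[of x y defect])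
  fix s assume "0 < x" "x \<le> s"
  then have "s > 0" by simp
  have "(defect has_real_derivative
      2 * v s * ((s + 1 / s) * u s) - (2 * s * (u s)\<^sup>2 + (s\<^sup>2 + 1) * (2 * u s * u' s))) (at s)"
    unfolding defect_def[abs_def]
    by (rule derivative_eq_intros has_real_derivative_u has_real_derivative_v \<open>s > 0\<close> refl)+
      (simp add: algebra_simps power2_eq_square)
  moreover have "2 * v s * ((s + 1 / s) * u s) - (2 * s * (u s)\<^sup>2 + (s\<^sup>2 + 1) * (2 * u s * u' s))
      = - 2 * s * (u s)\<^sup>2"
    using v_eq[OF \<open>s > 0\<close>] \<open>s > 0\<close> by (simp add: field_simps power2_eq_square)
  ultimately show "\<exists>y. (defect has_real_derivative y) (at s) \<and> y \<le> 0"
    using \<open>s > 0\<close> by auto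
qed

lemma u_sq_mono_if_energy_pos:
  assumes "s0 > 0" and "energy s0 > 0" and "s0 \<le> s"
  shows "(u s0)\<^sup>2 \<le> (u s)\<^sup>2"
proof (rule DERIV_nonneg_imp_nondecreasing[OF \<open>s0 \<le> s\<close>])
  fix x assume x: "s0 \<le> x"
  then have "x > 0" using assms by simp
  have "energy x = x * (u x * u' x)" using v_eq[OF \<open>x > 0\<close>] unfolding energy_def by simp
  moreover have "energy x > 0" using energy_mono[of s0 x] assms x by simp
  ultimately have "u x * u' x > 0" using \<open>x > 0\<close> by (metis zero_less_mult_pos)
  then have "2 * u x * u' x \<ge> 0" by simp
  moreover have "((\<lambda>x. (u x)\<^sup>2) has_real_derivative 2 * u x * u' x) (at x)"
    by (auto intro!: derivative_eq_intros has_real_derivative_u \<open>x > 0\<close>)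
  ultimately show "\<exists>y. ((\<lambda>x. (u x)\<^sup>2) has_real_derivative y) (at x) \<and> 0 \<le> y" by blast
qed

lemma deriv_bound_if_energy_pos:
  assumes "s0 \<ge> 1" and "energy s0 > 0"
  shows "\<exists>C. \<forall>s\<ge>s0. \<bar>u' s\<bar> \<le> C * \<bar>u s\<bar>"
proof -
  define c where "c = (u s0)\<^sup>2"
  define q where "q = \<bar>defect s0\<bar> / c"
  have "c > 0" using assms unfolding c_def energy_def by auto
  then have "q \<ge> 0" unfolding q_def by simp
  have u_sq_ge: "c \<le> (u s)\<^sup>2" if "s \<ge> s0" for s
    unfolding c_def using assms that by (intro u_sq_mono_if_energy_pos) auto
  have "\<bar>u' s\<bar> \<le> sqrt (2 + q) * \<bar>u s\<bar>" if s: "s \<ge> s0" for s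
  proof -
    have "s \<ge> 1" using s assms by simp
    then have "s\<^sup>2 \<ge> 1" by simp
    have "defect s \<le> q * (u s)\<^sup>2"
    proof -
      have "defect s \<le> \<bar>defect s0\<bar>" using defect_antimono[of s0 s] s assms by simp
      also have "\<dots> = q * c" unfolding q_def using \<open>c > 0\<close> by simp
      also have "\<dots> \<le> q * (u s)\<^sup>2" using u_sq_ge[OF s] \<open>q \<ge> 0\<close> by (rule mult_left_mono)
      finally show ?thesis .
    qed
    then have "s\<^sup>2 * (u' s)\<^sup>2 \<le> (s\<^sup>2 + (1 + q)) * (u s)\<^sup>2"
      using v_eq[of s] \<open>s \<ge> 1\<close> unfolding defect_def by (simp add: power_mult_distrib algebra_simps)
    also have "\<dots> \<le> s\<^sup>2 * (2 + q) * (u s)\<^sup>2"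
      using mult_right_mono[OF \<open>s\<^sup>2 \<ge> 1\<close>, of "1 + q"] \<open>q \<ge> 0\<close>
      by (intro mult_right_mono) (simp_all add: algebra_simps)
    finally have "s\<^sup>2 * (u' s)\<^sup>2 \<le> s\<^sup>2 * ((2 + q) * (u s)\<^sup>2)"
      by (simp add: mult.assoc)
    moreover have "s\<^sup>2 > 0" using \<open>s \<ge> 1\<close> by simp
    ultimately have "(u' s)\<^sup>2 \<le> (2 + q) * (u s)\<^sup>2"
      by (simp add: mult_le_cancel_left_pos)
    then have "sqrt ((u' s)\<^sup>2) \<le> sqrt ((2 + q) * (u s)\<^sup>2)" by (rule real_sqrt_le_mono)
    then show ?thesis by (simp add: real_sqrt_mult)
  qed
  then show ?thesis by blast
qed

lemma deriv_eq_0_if_energy_nonpos_and_root: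
  assumes nonpos: "\<And>s. s \<ge> 1 \<Longrightarrow> energy s \<le> 0"
    and "s1 \<ge> 1" "u s1 = 0" "s > s1"
  shows "u' s = 0"
proof -
  have zero: "energy t = 0" if "t \<ge> s1" for t
    using energy_mono[of s1 t] nonpos[of t] that assms(2,3) unfolding energy_def by auto
  have "s * (u' s)\<^sup>2 + (s + 1 / s) * (u s)\<^sup>2 = 0"
  proof (rule DERIV_local_const[OF has_real_derivative_energy])
    show "s > 0" "s - s1 > 0" using assms by auto
    show "\<forall>y. \<bar>s - y\<bar> < s - s1 \<longrightarrow> energy s = energy y"
      using zero \<open>s > s1\<close> by (auto simp: abs_less_iff)
  qed
  moreover have "(s + 1 / s) * (u s)\<^sup>2 \<ge> 0" using assms by simp
  moreover have "s * (u' s)\<^sup>2 \<ge> 0" using assms by simp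
  ultimately have "s * (u' s)\<^sup>2 = 0" by linarith
  then show ?thesis using assms by simp
qed

lemma deriv_bound_if_energy_nonpos:
  assumes nonpos: "\<And>s. s \<ge> 1 \<Longrightarrow> energy s \<le> 0"
    and nonzero: "\<And>s. s \<ge> 1 \<Longrightarrow> u s \<noteq> 0"
    and "s \<ge> 1"
  shows "\<bar>u' s\<bar> \<le> 3 * \<bar>u s\<bar>"
proof -
  \<comment> \<open>The logarithmic derivative \<open>r = - u' / u\<close> solves a Riccati equation.\<close>
  define r where "r s = - v s / (s * u s)" for s
  have u'_eq: "u' t = - r t * u t" if "t \<ge> 1" for t
    using nonzero[OF that] that v_eq[of t] unfolding r_def by (simp add: field_simps)
  have "r t \<ge> 0" if "t \<ge> 1" for t
  proof -
    have "r t = - energy t / (t * (u t)\<^sup>2)"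
      using nonzero[OF that] that unfolding r_def energy_def by (simp add: field_simps power2_eq_square)
    then show ?thesis using nonpos[OF that] that by (simp add: divide_nonpos_nonneg)
  qed
  moreover have "(r has_real_derivative (r t)\<^sup>2 - r t / t - 1 - 1 / t\<^sup>2) (at t)" if t: "t \<ge> 1" for t
  proof -
    have "t * u t \<noteq> 0" using nonzero[OF t] t by simp
    have "(r has_real_derivative
        (- ((t + 1 / t) * u t) * (t * u t) - (- v t) * (t * u' t + 1 * u t))
          / ((t * u t) * (t * u t))) (at t)"
      unfolding r_def[abs_def] using t \<open>t * u t \<noteq> 0\<close>
      by (intro DERIV_divide DERIV_minus DERIV_mult' DERIV_ident
          has_real_derivative_u has_real_derivative_v)
        auto
    moreover have "(- ((t + 1 / t) * u t) * (t * u t) - (- v t) * (t * u' t + 1 * u t))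
          / ((t * u t) * (t * u t))
        = (r t)\<^sup>2 - r t / t - 1 - 1 / t\<^sup>2"
      using nonzero[OF t] t v_eq[of t] unfolding r_def by (simp add: field_simps power2_eq_square)
    ultimately show ?thesis by simp
  qed
  then have "r s < 3" using \<open>s \<ge> 1\<close> by (rule riccati_solution_less_3)
  ultimately show ?thesis
    using u'_eq[OF \<open>s \<ge> 1\<close>] \<open>s \<ge> 1\<close> by (simp add: abs_mult mult_right_mono)
qed

lemma eventually_deriv_bound: "\<exists>S C. \<forall>s\<ge>S. \<bar>u' s\<bar> \<le> C * \<bar>u s\<bar>"
proof (cases "\<exists>s0\<ge>1. energy s0 > 0")
  case True
  then show ?thesis using deriv_bound_if_energy_pos by blast
next
  case False
  then have nonpos: "\<And>s. s \<ge> 1 \<Longrightarrow> energy s \<le> 0" by (auto simp: not_less)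
  show ?thesis
  proof (cases "\<exists>s1\<ge>1. u s1 = 0")
    case True
    then obtain s1 where "s1 \<ge> 1" "u s1 = 0" by blast
    then have "\<forall>s\<ge>s1 + 1. \<bar>u' s\<bar> \<le> 0 * \<bar>u s\<bar>"
      using deriv_eq_0_if_energy_nonpos_and_root[OF nonpos] by simp
    then show ?thesis by blast
  next
    case False
    then have "\<forall>s\<ge>1. \<bar>u' s\<bar> \<le> 3 * \<bar>u s\<bar>"
      using deriv_bound_if_energy_nonpos[OF nonpos] by blast
    then show ?thesis by blast
  qed
qed

end

lemma has_real_derivative_Re_imag_axis:
  assumes "(g has_field_derivative g') (at (\<i> * of_real s))"
  shows "((\<lambda>t. Re (g (\<i> * of_real t))) has_real_derivative Re (\<i> * g')) (at s)"
proof -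
  have "((\<lambda>t. \<i> * of_real t) has_vector_derivative \<i>) (at s)"
    using has_vector_derivative_real_field[of "\<lambda>w. \<i> * w" \<i> s UNIV]
    by (auto intro!: derivative_eq_intros)
  then have "((g \<circ> (\<lambda>t. \<i> * of_real t)) has_vector_derivative \<i> * g') (at s)"
    using assms by (rule field_vector_diff_chain_at)
  then show ?thesis
    by (intro has_field_derivative_Re) (simp add: o_def)
qed

lemma modified_bessel1_solution_Re_imag_axis:
  fixes H H' :: "complex \<Rightarrow> complex"
  assumes deriv: "\<And>s. s > 0 \<Longrightarrow> (H has_field_derivative H' (\<i> * of_real s)) (at (\<i> * of_real s))"
    and equation: "\<And>s. s > 0 \<Longrightarrow> ((\<lambda>z. z * H' z) has_field_derivative
                     (1 / (\<i> * of_real s) - \<i> * of_real s) * H (\<i> * of_real s)) (at (\<i> * of_real s))"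
  shows "modified_bessel1_solution (\<lambda>s. Re (H (\<i> * of_real s))) (\<lambda>s. Re (\<i> * H' (\<i> * of_real s)))
           (\<lambda>s. Re (\<i> * of_real s * H' (\<i> * of_real s)))"
proof
  fix s :: real assume "s > 0"
  show "((\<lambda>s. Re (H (\<i> * of_real s))) has_real_derivative Re (\<i> * H' (\<i> * of_real s))) (at s)"
    using deriv[OF \<open>s > 0\<close>] by (rule has_real_derivative_Re_imag_axis)
  have "\<i> * (1 / (\<i> * of_real s) - \<i> * of_real s) = of_real (s + 1 / s)"
    using \<open>s > 0\<close> by (simp add: field_simps)
  then have "Re (\<i> * ((1 / (\<i> * of_real s) - \<i> * of_real s) * H (\<i> * of_real s)))
      = (s + 1 / s) * Re (H (\<i> * of_real s))"
    by (simp only: mult.assoc[symmetric]) simp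
  then show "((\<lambda>s. Re (\<i> * of_real s * H' (\<i> * of_real s))) has_real_derivative
      (s + 1 / s) * Re (H (\<i> * of_real s))) (at s)"
    using has_real_derivative_Re_imag_axis[OF equation[OF \<open>s > 0\<close>]] by (simp add: mult.assoc)
  show "Re (\<i> * of_real s * H' (\<i> * of_real s)) = s * Re (\<i> * H' (\<i> * of_real s))"
    by (simp add: mult.assoc)
qed

lemma modified_bessel1_solution_Im_imag_axis:
  fixes H H' :: "complex \<Rightarrow> complex"
  assumes deriv: "\<And>s. s > 0 \<Longrightarrow> (H has_field_derivative H' (\<i> * of_real s)) (at (\<i> * of_real s))"
    and equation: "\<And>s. s > 0 \<Longrightarrow> ((\<lambda>z. z * H' z) has_field_derivative
                     (1 / (\<i> * of_real s) - \<i> * of_real s) * H (\<i> * of_real s)) (at (\<i> * of_real s))"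
  shows "modified_bessel1_solution (\<lambda>s. Im (H (\<i> * of_real s))) (\<lambda>s. Re (H' (\<i> * of_real s)))
           (\<lambda>s. s * Re (H' (\<i> * of_real s)))"
proof -
  \<comment> \<open>The equation is complex-linear, so \<open>- \<i> * H\<close> solves it too; its real part is \<open>Im H\<close>.\<close>
  have "modified_bessel1_solution (\<lambda>s. Re (- \<i> * H (\<i> * of_real s)))
      (\<lambda>s. Re (\<i> * (- \<i> * H' (\<i> * of_real s)))) (\<lambda>s. Re (\<i> * of_real s * (- \<i> * H' (\<i> * of_real s))))"
  proof (rule modified_bessel1_solution_Re_imag_axis)
    fix s :: real assume "s > 0"
    show "((\<lambda>z. - \<i> * H z) has_field_derivative - \<i> * H' (\<i> * of_real s)) (at (\<i> * of_real s))"
      by (intro DERIV_cmult deriv \<open>s > 0\<close>)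
    have "((\<lambda>z. - \<i> * (z * H' z)) has_field_derivative
        - \<i> * ((1 / (\<i> * of_real s) - \<i> * of_real s) * H (\<i> * of_real s))) (at (\<i> * of_real s))"
      by (intro DERIV_cmult equation \<open>s > 0\<close>)
    then show "((\<lambda>z. z * (- \<i> * H' z)) has_field_derivative
        (1 / (\<i> * of_real s) - \<i> * of_real s) * (- \<i> * H (\<i> * of_real s))) (at (\<i> * of_real s))"
      by (simp add: algebra_simps)
  qed
  then show ?thesis by simp
qed

lemma cmod_le_if_cross_bounds:
  assumes "\<bar>Im w'\<bar> \<le> C1 * \<bar>Re w\<bar>" and "\<bar>Re w'\<bar> \<le> C2 * \<bar>Im w\<bar>"
  shows "cmod w' \<le> 2 * max (max C1 C2) 0 * cmod w"
proof -
  define M where "M = max (max C1 C2) 0"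
  have "C1 \<le> M" "C2 \<le> M" unfolding M_def by auto
  have "\<bar>Im w'\<bar> \<le> M * \<bar>Re w\<bar>"
    using order_trans[OF assms(1) mult_right_mono[OF \<open>C1 \<le> M\<close> abs_ge_zero]] .
  moreover have "\<bar>Re w'\<bar> \<le> M * \<bar>Im w\<bar>"
    using order_trans[OF assms(2) mult_right_mono[OF \<open>C2 \<le> M\<close> abs_ge_zero]] .
  moreover have "M * \<bar>Re w\<bar> \<le> M * cmod w" "M * \<bar>Im w\<bar> \<le> M * cmod w"
    unfolding M_def by (intro mult_left_mono abs_Re_le_cmod abs_Im_le_cmod; simp)+
  moreover have "cmod w' \<le> \<bar>Re w'\<bar> + \<bar>Im w'\<bar>" by (rule cmod_le)
  ultimately show ?thesis unfolding M_def by linarith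
qed

lemma deriv_bound_imag_axis:
  fixes H H' :: "complex \<Rightarrow> complex"
  assumes deriv: "\<And>s. s > 0 \<Longrightarrow> (H has_field_derivative H' (\<i> * of_real s)) (at (\<i> * of_real s))"
    and equation: "\<And>s. s > 0 \<Longrightarrow> ((\<lambda>z. z * H' z) has_field_derivative
                     (1 / (\<i> * of_real s) - \<i> * of_real s) * H (\<i> * of_real s)) (at (\<i> * of_real s))"
  shows "\<exists>S C. S > 0 \<and> C \<ge> 0 \<and> (\<forall>s\<ge>S. cmod (H' (\<i> * of_real s)) \<le> C * cmod (H (\<i> * of_real s)))"
proof -
  obtain S1 C1 where re: "\<And>s. s \<ge> S1 \<Longrightarrow> \<bar>Im (H' (\<i> * of_real s))\<bar> \<le> C1 * \<bar>Re (H (\<i> * of_real s))\<bar>"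
    using modified_bessel1_solution.eventually_deriv_bound[OF
        modified_bessel1_solution_Re_imag_axis[OF deriv equation]]
    by auto
  obtain S2 C2 where im: "\<And>s. s \<ge> S2 \<Longrightarrow> \<bar>Re (H' (\<i> * of_real s))\<bar> \<le> C2 * \<bar>Im (H (\<i> * of_real s))\<bar>"
    using modified_bessel1_solution.eventually_deriv_bound[OF
        modified_bessel1_solution_Im_imag_axis[OF deriv equation]]
    by auto
  have "cmod (H' (\<i> * of_real s)) \<le> 2 * max (max C1 C2) 0 * cmod (H (\<i> * of_real s))"
    if "s \<ge> max (max S1 S2) 1" for s
    using that by (intro cmod_le_if_cross_bounds re im) auto
  then show ?thesis by (intro exI[of _ "max (max S1 S2) 1"] exI[of _ "2 * max (max C1 C2) 0"]) auto
qed

lemma hfun_imag_axis_bound: "\<exists>S C. S > 0 \<and> C \<ge> 0 \<and> (\<forall>s\<ge>S. cmod (hfun (\<i> * of_real s)) \<le> C * s)"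
proof -
  have off_cut: "\<i> * of_real s / 2 \<notin> \<real>\<^sub>\<le>\<^sub>0" if "s > 0" for s
    using that by (simp add: complex_nonpos_Reals_iff)
  obtain S C where "S > 0" "C \<ge> 0"
    and bound: "\<And>s. s \<ge> S \<Longrightarrow> cmod (hankel1_deriv (\<i> * of_real s)) \<le> C * cmod (hankel1 (\<i> * of_real s))"
    using deriv_bound_imag_axis[of hankel1 hankel1_deriv]
      has_field_derivative_hankel1[OF off_cut] hankel1_equation[OF off_cut] by blast
  have "cmod (hfun (\<i> * of_real s)) \<le> C * s" if "s \<ge> S" for s
  proof (cases "hankel1 (\<i> * of_real s) = 0")
    case True
    then show ?thesis using \<open>C \<ge> 0\<close> \<open>S > 0\<close> that by (simp add: hfun_def)
  next
    case False
    have "deriv hankel1 (\<i> * of_real s) = hankel1_deriv (\<i> * of_real s)"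
      using \<open>S > 0\<close> that by (intro DERIV_imp_deriv has_field_derivative_hankel1 off_cut) simp
    then have "cmod (hfun (\<i> * of_real s))
        = s * cmod (hankel1_deriv (\<i> * of_real s)) / cmod (hankel1 (\<i> * of_real s))"
      using \<open>S > 0\<close> that by (simp add: hfun_def norm_mult norm_divide)
    also have "\<dots> \<le> s * (C * cmod (hankel1 (\<i> * of_real s))) / cmod (hankel1 (\<i> * of_real s))"
      using \<open>S > 0\<close> that bound[OF that] by (intro divide_right_mono mult_left_mono) auto
    also have "\<dots> = C * s" using False by simp
    finally show ?thesis .
  qed
  then show ?thesis using \<open>S > 0\<close> \<open>C \<ge> 0\<close> by blast
qed

lemma kmode_eventually_imaginary:
  assumes "Z > 0"
  shows "\<forall>\<^sub>F m in sequentially. \<exists>s. kmode k Z m = \<i> * of_real s \<and> S \<le> s \<and> s \<le> real m * pi / Z"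
proof -
  define X where "X = sqrt (S\<^sup>2 + k\<^sup>2)"
  have "\<forall>\<^sub>F m in sequentially. X * Z / pi \<le> real m"
    using filterlim_real_sequentially by (simp add: filterlim_at_top)
  then show ?thesis
  proof (rule eventually_mono)
    fix m assume "X * Z / pi \<le> real m"
    define a where "a = real m * pi / Z"
    have "X \<le> a" using \<open>X * Z / pi \<le> real m\<close> assms unfolding a_def by (simp add: field_simps)
    moreover have "\<bar>k\<bar> \<le> X" "\<bar>S\<bar> \<le> X" "0 \<le> X"
      unfolding X_def by (auto intro!: real_le_rsqrt)
    ultimately have "\<not> k > a" "S\<^sup>2 \<le> a\<^sup>2 - k\<^sup>2" "0 \<le> a"
      using real_sqrt_pow2[of "S\<^sup>2 + k\<^sup>2"] power_mono[OF \<open>X \<le> a\<close> \<open>0 \<le> X\<close>, of 2]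
      unfolding X_def[symmetric] by auto
    then have "kmode k Z m = \<i> * of_real (sqrt (a\<^sup>2 - k\<^sup>2))"
      and "S \<le> sqrt (a\<^sup>2 - k\<^sup>2)" and "sqrt (a\<^sup>2 - k\<^sup>2) \<le> a"
      unfolding kmode_def a_def[symmetric] by (auto intro!: real_le_rsqrt real_le_lsqrt)
    then show "\<exists>s. kmode k Z m = \<i> * of_real s \<and> S \<le> s \<and> s \<le> real m * pi / Z"
      unfolding a_def by blast
  qed
qed

lemma linear_bound_if_eventually_linear_bound:
  fixes f :: "nat \<Rightarrow> real"
  assumes "\<forall>\<^sub>F m in sequentially. f m \<le> K * real m"
  shows "\<exists>B>0. \<forall>m\<ge>1. f m \<le> B * real m"
proof -
  obtain N where N: "\<And>m. m \<ge> N \<Longrightarrow> f m \<le> K * real m"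
    using assms unfolding eventually_sequentially by blast
  define B where "B = max K 0 + (\<Sum>m<N. \<bar>f m\<bar>) + 1"
  have "(\<Sum>m<N. \<bar>f m\<bar>) \<ge> 0" by (intro sum_nonneg) simp
  then have "B > 0" "K \<le> B"
    using max.cobounded1[of K 0] max.cobounded2[of 0 K] unfolding B_def by linarith+
  have "f m \<le> B * real m" if "m \<ge> 1" for m
  proof (cases "m < N")
    case True
    have "f m \<le> \<bar>f m\<bar>" by simp
    also have "\<dots> \<le> (\<Sum>m<N. \<bar>f m\<bar>)"
      using True by (intro member_le_sum) auto
    also have "\<dots> \<le> B" unfolding B_def by simp
    also have "\<dots> \<le> B * real m"
      using mult_left_mono[of 1 "real m" B] that \<open>B > 0\<close> by simp
    finally show ?thesis .
  next
    case False
    then have "f m \<le> K * real m" by (intro N) simp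
    also have "\<dots> \<le> B * real m" using \<open>K \<le> B\<close> by (rule mult_right_mono) simp
    finally show ?thesis .
  qed
  with \<open>B > 0\<close> show ?thesis by blast
qed

lemma hfun_kmode_linear_bound:
  assumes "Z > 0" "R > 0"
  shows "\<exists>B>0. \<forall>m\<ge>1. cmod (hfun (kmode k Z m * of_real R)) \<le> B * real m"
proof -
  obtain S C where "S > 0" "C \<ge> 0" and bound: "\<And>s. s \<ge> S \<Longrightarrow> cmod (hfun (\<i> * of_real s)) \<le> C * s"
    using hfun_imag_axis_bound by blast
  have "\<forall>\<^sub>F m in sequentially. cmod (hfun (kmode k Z m * of_real R)) \<le> C * R * pi / Z * real m"
    using kmode_eventually_imaginary[OF \<open>Z > 0\<close>, of k "S / R"]
  proof (rule eventually_mono, elim exE conjE)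
    fix m s assume "kmode k Z m = \<i> * of_real s" "S / R \<le> s" "s \<le> real m * pi / Z"
    then have kmode_R: "kmode k Z m * of_real R = \<i> * of_real (s * R)" and "S \<le> s * R"
      using \<open>R > 0\<close> by (simp_all add: mult.assoc divide_le_eq)
    have "cmod (hfun (kmode k Z m * of_real R)) \<le> C * (s * R)"
      unfolding kmode_R by (rule bound) fact
    also have "\<dots> \<le> C * (real m * pi / Z * R)"
      using \<open>s \<le> real m * pi / Z\<close> \<open>C \<ge> 0\<close> \<open>R > 0\<close> by (intro mult_left_mono mult_right_mono) auto
    finally show "cmod (hfun (kmode k Z m * of_real R)) \<le> C * R * pi / Z * real m"
      by (simp add: field_simps)
  qed
  then show ?thesis by (rule linear_bound_if_eventually_linear_bound)
qed

lemma Hmhalf_estimate: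
  assumes v: "in_Hhalf v" and "B \<ge> 0"
    and coeff_bound: "\<And>m. m \<ge> 1 \<Longrightarrow> cmod (\<xi> m) \<le> B * real m * cmod (v m)"
  shows "in_Hmhalf \<xi> \<and> norm_Hmhalf \<xi> \<le> B * norm_Hhalf v"
proof -
  define f where "f m = (cmod (\<xi> m))\<^sup>2 / real m" for m
  define g where "g m = B\<^sup>2 * (real m * (cmod (v m))\<^sup>2)" for m
  have sv: "summable (\<lambda>m. real m * (cmod (v m))\<^sup>2)" using v unfolding in_Hhalf_def .
  then have sg: "summable g" unfolding g_def by (rule summable_mult)
  have fg: "f m \<le> g m" for m
  proof (cases "m = 0")
    case False
    then have "f m \<le> (B * real m * cmod (v m))\<^sup>2 / real m"
      unfolding f_def using coeff_bound[of m] by (intro divide_right_mono power_mono) auto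
    also have "\<dots> = g m"
      using False unfolding g_def by (simp add: field_simps power2_eq_square)
    finally show ?thesis .
  qed (simp add: f_def g_def)
  have sf: "summable f"
    by (rule summable_comparison_test'[OF sg, of 0]) (use fg in \<open>simp add: f_def\<close>)
  have "suminf f \<le> B\<^sup>2 * (\<Sum>m. real m * (cmod (v m))\<^sup>2)"
    using suminf_le[OF fg sf sg] unfolding g_def suminf_mult[OF sv] .
  then have "sqrt (suminf f) \<le> B * norm_Hhalf v"
    using real_sqrt_le_mono \<open>B \<ge> 0\<close> unfolding norm_Hhalf_def by (fastforce simp: real_sqrt_mult)
  then show ?thesis
    using sf unfolding in_Hmhalf_def norm_Hmhalf_def f_def by simp
qed

theorem lemma3p3:
  fixes Z R k :: real
  assumes "Z > 0" and "R > 0" and "k > 0"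
    and "\<And>m::nat. m \<ge> 1 \<Longrightarrow> k \<noteq> real m * pi / Z"
  shows "\<exists>C>0. \<forall>v. in_Hhalf v \<longrightarrow>
           in_Hmhalf (DtN k R Z v) \<and> norm_Hmhalf (DtN k R Z v) \<le> C * norm_Hhalf v"
proof -
  obtain B where "B > 0"
    and hfun_bound: "\<And>m. m \<ge> 1 \<Longrightarrow> cmod (hfun (kmode k Z m * of_real R)) \<le> B * real m"
    using hfun_kmode_linear_bound[OF \<open>Z > 0\<close> \<open>R > 0\<close>] by blast
  have "in_Hmhalf (DtN k R Z v) \<and> norm_Hmhalf (DtN k R Z v) \<le> B * norm_Hhalf v"
    if "in_Hhalf v" for v
  proof (rule Hmhalf_estimate[OF that])
    fix m :: nat assume "m \<ge> 1"
    then show "cmod (DtN k R Z v m) \<le> B * real m * cmod (v m)"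
      using hfun_bound[of m] by (simp add: DtN_def norm_mult mult_right_mono)
  qed (use \<open>B > 0\<close> in simp)
  then show ?thesis using \<open>B > 0\<close> by blast
qed

end
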